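(* Consider the program $\mathsf{P}$ of $\mathcal{H}$ consisting of the four clauses $\mathsf{s}\,\mathsf{Q}\leftarrow\mathsf{Q}\,(\mathsf{s}\,\mathsf{Q})$; $\mathsf{p}\,\mathsf{R}\leftarrow\mathsf{R}$; $\mathsf{q}\,\mathsf{R}\leftarrow\,\sim(\mathsf{w}\,\mathsf{R})$; $\mathsf{w}\,\mathsf{R}\leftarrow\,\sim\mathsf{R}$, where $\mathsf{Q}$ is a predicate variable of type $o\to o$, $\mathsf{R}$ is a predicate variable of type $o$, $\mathsf{p},\mathsf{q},\mathsf{w}$ are predicate constants of type $o\to o$ and $\mathsf{s}$ is a predicate constant of type $(o\to o)\to o$. Then the Herbrand interpretation $\mathcal{M}_\mathsf{P}$ of $\mathsf{P}$ (whose valuation function is the well-founded model of $\mathsf{Gr(P)}$) is not extensional.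
   Context: Types of $\mathcal{H}$: base types $\iota,o$; predicate types $\pi ::= o\mid\rho\to\pi$; argument types $\rho::=\iota\mid\pi$. Terms are built from variables, constants and function symbols by typed application; atoms are terms of type $o$; literals are atoms, equalities between terms of type $\iota$, and negated atoms $\sim\mathsf{E}$. For a program $\mathsf{P}$, $U_{\mathsf{P},\rho}$ is the set of ground terms of argument type $\rho$ built from the constants and function symbols occurring in $\mathsf{P}$. The ground instantiation $\mathsf{Gr(P)}$ is the set of all clauses obtained from clauses of $\mathsf{P}$ by replacing every variable by an element of $U_{\mathsf{P},\rho}$ of the same type; it is regarded as a (possibly infinite) propositional program with the ground atoms as propositional variables (ground equalities being the constants true/false according to syntactic identity). The well-founded model of $\mathsf{Gr(P)}$ is the usual (three-valued, values $\mathit{false},0,\mathit{true}$) well-founded model of this propositional program. $\mathcal{M}_\mathsf{P}$ is the Herbrand interpretation of $\mathsf{P}$ (symbols interpreted by themselves, application syntactic) whose valuation $v$ assigns to each ground atom its value in the well-founded model of $\mathsf{Gr(P)}$, with $v(\sim\mathsf{E})$ swapping $\mathit{true}/\mathit{false}$ and fixing $0$. Extensional equality: for a valuation $v$ and argument type $\rho$, the relation $\cong_{v,\rho}$ on $U_{\mathsf{P},\rho}$ is defined by: for $\rho=\iota$, $d\cong d'$ iff $d=d'$; for $\rho=o$, $d\cong d'$ iff $v(d)=v(d')$; for $\rho=\rho'\to\pi$, $d\cong_{v,\rho}d'$ iff $(d\,e)\cong_{v,\pi}(d'\,e')$ for all $e,e'\in U_{\mathsf{P},\rho'}$ with $e\cong_{v,\rho'}e'$.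 A Herbrand interpretation $I$ with valuation $v_I$ is extensional if for every argument type $\rho$ the relation $\cong_{v_I,\rho}$ is reflexive, i.e. $\mathsf{E}\cong_{v_I,\rho}\mathsf{E}$ for all $\mathsf{E}\in U_{\mathsf{P},\rho}$. *)

theory Defs
  imports Main
begin

datatype ty = Iota | Omic | Arrow ty ty

inductive pred_ty :: "ty \<Rightarrow> bool" and arg_ty :: "ty \<Rightarrow> bool" where
  "pred_ty Omic"
| "arg_ty r \<Longrightarrow> pred_ty p \<Longrightarrow> pred_ty (Arrow r p)"
| "arg_ty Iota"
| "pred_ty p \<Longrightarrow> arg_ty p"

datatype hterm = Var string ty | Con string ty | App hterm hterm

datatype lit = Pos hterm | Neg hterm | Eq hterm hterm

type_synonym clause = "hterm \<times> lit list"   (* head <- body *)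
type_synonym program = "clause set"

fun cons_of :: "hterm \<Rightarrow> (string \<times> ty) set" where
  "cons_of (Var x t) = {}"
| "cons_of (Con c t) = {(c, t)}"
| "cons_of (App a b) = cons_of a \<union> cons_of b"

fun vars_of :: "hterm \<Rightarrow> (string \<times> ty) set" where
  "vars_of (Var x t) = {(x, t)}"
| "vars_of (Con c t) = {}"
| "vars_of (App a b) = vars_of a \<union> vars_of b"

fun lit_terms :: "lit \<Rightarrow> hterm set" where
  "lit_terms (Pos a) = {a}"
| "lit_terms (Neg a) = {a}"
| "lit_terms (Eq a b) = {a, b}"

definition clause_terms :: "clause \<Rightarrow> hterm set" where
  "clause_terms c = insert (fst c) (\<Union>l\<in>set (snd c). lit_terms l)"

definition prog_syms :: "program \<Rightarrow> (string \<times> ty) set" where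
  "prog_syms P = (\<Union>c\<in>P. \<Union>t\<in>clause_terms c. cons_of t)"

definition clause_vars :: "clause \<Rightarrow> (string \<times> ty) set" where
  "clause_vars c = (\<Union>t\<in>clause_terms c. vars_of t)"

inductive ground_of :: "program \<Rightarrow> hterm \<Rightarrow> ty \<Rightarrow> bool" for P where
  "(c, t) \<in> prog_syms P \<Longrightarrow> ground_of P (Con c t) t"
| "ground_of P f (Arrow a b) \<Longrightarrow> ground_of P e a \<Longrightarrow> ground_of P (App f e) b"

definition U :: "program \<Rightarrow> ty \<Rightarrow> hterm set" where
  "U P r = {t. ground_of P t r}"

fun subst :: "(string \<times> ty \<Rightarrow> hterm) \<Rightarrow> hterm \<Rightarrow> hterm" where
  "subst \<theta> (Var x t) = \<theta> (x, t)"
| "subst \<theta> (Con c t) = Con c t"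
| "subst \<theta> (App a b) = App (subst \<theta> a) (subst \<theta> b)"

fun subst_lit :: "(string \<times> ty \<Rightarrow> hterm) \<Rightarrow> lit \<Rightarrow> lit" where
  "subst_lit \<theta> (Pos a) = Pos (subst \<theta> a)"
| "subst_lit \<theta> (Neg a) = Neg (subst \<theta> a)"
| "subst_lit \<theta> (Eq a b) = Eq (subst \<theta> a) (subst \<theta> b)"

definition Gr :: "program \<Rightarrow> clause set" where
  "Gr P = {(subst \<theta> h, map (subst_lit \<theta>) b) | h b \<theta>.
             (h, b) \<in> P \<and> (\<forall>(x, t) \<in> clause_vars (h, b). \<theta> (x, t) \<in> U P t)}"

text \<open>Ground atoms are the propositional variables; a ground equality is true iff
  both sides are syntactically identical.  \<open>GL G J\<close> is the least model of the
  Gelfond--Lifschitz reduct of G w.r.t. the two-valued interpretation J.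
  The well-founded model is obtained by Van Gelder's alternating fixpoint:
  true atoms = lfp (GL\<circ>GL), non-false atoms = GL (lfp (GL\<circ>GL)).\<close>

definition GL :: "clause set \<Rightarrow> hterm set \<Rightarrow> hterm set" where
  "GL G J = lfp (\<lambda>I. {h. \<exists>b. (h, b) \<in> G \<and>
      (\<forall>l\<in>set b. case l of Pos a \<Rightarrow> a \<in> I | Neg a \<Rightarrow> a \<notin> J | Eq s t \<Rightarrow> s = t)})"

definition wf_true :: "clause set \<Rightarrow> hterm set" where
  "wf_true G = lfp (\<lambda>J. GL G (GL G J))"

definition wf_nonfalse :: "clause set \<Rightarrow> hterm set" where
  "wf_nonfalse G = GL G (wf_true G)"

datatype tv = FalseV | ZeroV | TrueV

definition wf_val :: "clause set \<Rightarrow> hterm \<Rightarrow> tv" where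
  "wf_val G a = (if a \<in> wf_true G then TrueV
                 else if a \<notin> wf_nonfalse G then FalseV else ZeroV)"

definition MP_val :: "program \<Rightarrow> hterm \<Rightarrow> tv" where
  "MP_val P = wf_val (Gr P)"

fun ext_eq :: "program \<Rightarrow> (hterm \<Rightarrow> tv) \<Rightarrow> ty \<Rightarrow> hterm \<Rightarrow> hterm \<Rightarrow> bool" where
  "ext_eq P v Iota d d' = (d = d')"
| "ext_eq P v Omic d d' = (v d = v d')"
| "ext_eq P v (Arrow r p) d d' =
     (\<forall>e e'. e \<in> U P r \<longrightarrow> e' \<in> U P r \<longrightarrow> ext_eq P v r e e' \<longrightarrow>
             ext_eq P v p (App d e) (App d' e'))"

definition extensional :: "program \<Rightarrow> (hterm \<Rightarrow> tv) \<Rightarrow> bool" where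
  "extensional P v = (\<forall>r. arg_ty r \<longrightarrow> (\<forall>E \<in> U P r. ext_eq P v r E E))"

abbreviation "oo \<equiv> Arrow Omic Omic"

definition ex_prog :: program where
  "ex_prog = {
     (App (Con ''s'' (Arrow oo Omic)) (Var ''Q'' oo),
        [Pos (App (Var ''Q'' oo) (App (Con ''s'' (Arrow oo Omic)) (Var ''Q'' oo)))]),
     (App (Con ''p'' oo) (Var ''R'' Omic), [Pos (Var ''R'' Omic)]),
     (App (Con ''q'' oo) (Var ''R'' Omic), [Neg (App (Con ''w'' oo) (Var ''R'' Omic))]),
     (App (Con ''w'' oo) (Var ''R'' Omic), [Neg (Var ''R'' Omic)]) }"

end

theory Submission
  imports Defs
begin

text \<open>The ground atom \<open>s p\<close> depends only on itself, through the positive loop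
  \<open>s p \<leftarrow> p (s p) \<leftarrow> s p\<close>, so it is false.  The atom \<open>s q\<close> depends on itself through
  \<open>s q \<leftarrow> q (s q) \<leftarrow> \<sim>w (s q)\<close> and \<open>w (s q) \<leftarrow> \<sim>s q\<close>, a loop through negation, so it is
  undefined.  Yet \<open>p R\<close> has the value of \<open>R\<close> and \<open>q R\<close> that of \<open>\<sim>\<sim>R\<close>, which is again
  that of \<open>R\<close>; so \<open>p \<cong> q\<close> while \<open>s p\<close> and \<open>s q\<close> differ, i.e.\ \<open>s \<cong> s\<close> fails.\<close>

definition gl_step :: "clause set \<Rightarrow> hterm set \<Rightarrow> hterm set \<Rightarrow> hterm set" where
  "gl_step G J I = {h. \<exists>b. (h, b) \<in> G \<and>
      (\<forall>l\<in>set b. case l of Pos a \<Rightarrow> a \<in> I | Neg a \<Rightarrow> a \<notin> J | Eq s t \<Rightarrow> s = t)}"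

lemma gl_step_mono: "I \<subseteq> I' \<Longrightarrow> gl_step G J I \<subseteq> gl_step G J I'"
  unfolding gl_step_def by (fastforce split: lit.splits)

lemma gl_step_antimono: "J \<subseteq> J' \<Longrightarrow> gl_step G J' I \<subseteq> gl_step G J I"
  unfolding gl_step_def by (fastforce split: lit.splits)

lemma GL_eq_lfp: "GL G J = lfp (gl_step G J)"
  unfolding GL_def gl_step_def ..

lemma GL_unfold: "GL G J = gl_step G J (GL G J)"
  unfolding GL_eq_lfp by (rule lfp_unfold) (simp add: mono_def gl_step_mono)

lemma GL_lowerbound: "gl_step G J S \<subseteq> S \<Longrightarrow> GL G J \<subseteq> S"
  unfolding GL_eq_lfp by (rule lfp_lowerbound)

lemma GL_antimono: "J \<subseteq> J' \<Longrightarrow> GL G J' \<subseteq> GL G J"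
  unfolding GL_eq_lfp by (rule lfp_mono) (rule gl_step_antimono)

lemma wf_true_eq_GL: "wf_true G = GL G (wf_nonfalse G)"
proof -
  have "mono (\<lambda>J. GL G (GL G J))"
    by (simp add: mono_def GL_antimono)
  then show ?thesis
    unfolding wf_true_def wf_nonfalse_def by (rule lfp_unfold)
qed

lemma wf_true_lowerbound: "GL G (GL G S) \<subseteq> S \<Longrightarrow> wf_true G \<subseteq> S"
  unfolding wf_true_def by (rule lfp_lowerbound)

lemma wf_val_eqI:
  assumes "\<And>J. a \<in> GL G J \<longleftrightarrow> b \<in> GL G J"
  shows "wf_val G a = wf_val G b"
proof -
  have "a \<in> wf_true G \<longleftrightarrow> b \<in> wf_true G"
    using assms[of "wf_nonfalse G"] by (simp only: wf_true_eq_GL)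
  moreover have "a \<in> wf_nonfalse G \<longleftrightarrow> b \<in> wf_nonfalse G"
    using assms[of "wf_true G"] by (simp only: wf_nonfalse_def)
  ultimately show ?thesis
    unfolding wf_val_def by simp
qed

lemma wf_val_double_negation:
  assumes "\<And>J. a \<in> GL G J \<longleftrightarrow> c \<notin> J" and "\<And>J. c \<in> GL G J \<longleftrightarrow> b \<notin> J"
  shows "wf_val G a = wf_val G b"
proof -
  have "a \<in> wf_true G \<longleftrightarrow> b \<in> wf_true G"
    using assms(1)[of "wf_nonfalse G"] assms(2)[of "wf_true G"]
    by (metis wf_true_eq_GL wf_nonfalse_def)
  moreover have "a \<in> wf_nonfalse G \<longleftrightarrow> b \<in> wf_nonfalse G"
    using assms(1)[of "wf_true G"] assms(2)[of "wf_nonfalse G"]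
    by (metis wf_true_eq_GL wf_nonfalse_def)
  ultimately show ?thesis
    unfolding wf_val_def by simp
qed

lemma wf_val_positive_loop:
  assumes "\<And>J I. a \<in> gl_step G J I \<Longrightarrow> b \<in> I" and "\<And>J I. b \<in> gl_step G J I \<Longrightarrow> a \<in> I"
  shows "wf_val G a = FalseV"
proof -
  have a_not_GL: "a \<notin> GL G J" for J
  proof -
    have "GL G J \<subseteq> - {a, b}"
      by (rule GL_lowerbound) (use assms in blast)
    then show ?thesis by blast
  qed
  have "a \<notin> wf_nonfalse G"
    using a_not_GL unfolding wf_nonfalse_def by blast
  moreover have "a \<notin> wf_true G"
    using a_not_GL unfolding wf_true_eq_GL by blast
  ultimately show ?thesis
    unfolding wf_val_def by simp
qed

lemma wf_val_negative_loop:
  assumes a_iff: "\<And>J. a \<in> GL G J \<longleftrightarrow> c \<notin> J" and c_iff: "\<And>J. c \<in> GL G J \<longleftrightarrow> a \<notin> J"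
  shows "wf_val G a = ZeroV"
proof -
  let ?S = "- {a, c}"
  have "GL G (GL G ?S) \<subseteq> ?S"
    using a_iff c_iff by blast
  then have "wf_true G \<subseteq> ?S"
    by (rule wf_true_lowerbound)
  then have "a \<notin> wf_true G" and "a \<in> wf_nonfalse G"
    unfolding wf_nonfalse_def using a_iff by auto
  then show ?thesis
    unfolding wf_val_def by simp
qed

abbreviation "s \<equiv> Con ''s'' (Arrow oo Omic)"
abbreviation "p \<equiv> Con ''p'' oo"
abbreviation "q \<equiv> Con ''q'' oo"
abbreviation "w \<equiv> Con ''w'' oo"

lemma constants_in_U:
  "s \<in> U ex_prog (Arrow oo Omic)" "p \<in> U ex_prog oo" "q \<in> U ex_prog oo" "w \<in> U ex_prog oo"
  unfolding U_def
  by (auto intro!: ground_of.intros simp: prog_syms_def ex_prog_def clause_terms_def)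

lemma App_in_U: "f \<in> U P (Arrow r t) \<Longrightarrow> e \<in> U P r \<Longrightarrow> App f e \<in> U P t"
  unfolding U_def by (auto intro: ground_of.intros)

lemma s_q_in_U: "App s q \<in> U ex_prog Omic"
  using App_in_U constants_in_U by blast

lemma ground_instance_in_Gr:
  assumes "(h, b) \<in> P" and "\<And>x t. (x, t) \<in> clause_vars (h, b) \<Longrightarrow> \<theta> (x, t) \<in> U P t"
  shows "(subst \<theta> h, map (subst_lit \<theta>) b) \<in> Gr P"
  using assms unfolding Gr_def by blast

lemma Gr_ex_prog_iff: "(h, b) \<in> Gr ex_prog \<longleftrightarrow>
   (\<exists>Q \<in> U ex_prog oo. h = App s Q \<and> b = [Pos (App Q (App s Q))]) \<or>
   (\<exists>t \<in> U ex_prog Omic. h = App p t \<and> b = [Pos t]) \<or>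
   (\<exists>t \<in> U ex_prog Omic. h = App q t \<and> b = [Neg (App w t)]) \<or>
   (\<exists>t \<in> U ex_prog Omic. h = App w t \<and> b = [Neg t])"
  (is "_ \<longleftrightarrow> ?s \<or> ?p \<or> ?q \<or> ?w")
proof
  assume "(h, b) \<in> Gr ex_prog"
  then show "?s \<or> ?p \<or> ?q \<or> ?w"
    unfolding Gr_def ex_prog_def clause_vars_def clause_terms_def by auto
next
  note inst = ground_instance_in_Gr[of _ _ ex_prog]
  assume "?s \<or> ?p \<or> ?q \<or> ?w"
  then show "(h, b) \<in> Gr ex_prog"
  proof (elim disjE bexE conjE)
    fix Q assume "Q \<in> U ex_prog oo" "h = App s Q" "b = [Pos (App Q (App s Q))]"
    then show ?thesis
      using inst[of "App s (Var ''Q'' oo)" "[Pos (App (Var ''Q'' oo) (App s (Var ''Q'' oo)))]"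
          "\<lambda>_. Q"]
      by (simp add: ex_prog_def clause_vars_def clause_terms_def)
  next
    fix t assume "t \<in> U ex_prog Omic" "h = App p t" "b = [Pos t]"
    then show ?thesis
      using inst[of "App p (Var ''R'' Omic)" "[Pos (Var ''R'' Omic)]" "\<lambda>_. t"]
      by (simp add: ex_prog_def clause_vars_def clause_terms_def)
  next
    fix t assume "t \<in> U ex_prog Omic" "h = App q t" "b = [Neg (App w t)]"
    then show ?thesis
      using inst[of "App q (Var ''R'' Omic)" "[Neg (App w (Var ''R'' Omic))]" "\<lambda>_. t"]
      by (simp add: ex_prog_def clause_vars_def clause_terms_def)
  next
    fix t assume "t \<in> U ex_prog Omic" "h = App w t" "b = [Neg t]"
    then show ?thesis
      using inst[of "App w (Var ''R'' Omic)" "[Neg (Var ''R'' Omic)]" "\<lambda>_. t"]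
      by (simp add: ex_prog_def clause_vars_def clause_terms_def)
  qed
qed

lemma gl_step_ex_prog_iff: "x \<in> gl_step (Gr ex_prog) J I \<longleftrightarrow>
   (\<exists>Q \<in> U ex_prog oo. x = App s Q \<and> App Q (App s Q) \<in> I) \<or>
   (\<exists>t \<in> U ex_prog Omic. x = App p t \<and> t \<in> I) \<or>
   (\<exists>t \<in> U ex_prog Omic. x = App q t \<and> App w t \<notin> J) \<or>
   (\<exists>t \<in> U ex_prog Omic. x = App w t \<and> t \<notin> J)"
  unfolding gl_step_def by (auto simp: Gr_ex_prog_iff)

lemma GL_ex_prog_iff: "x \<in> GL (Gr ex_prog) J \<longleftrightarrow>
   (\<exists>Q \<in> U ex_prog oo. x = App s Q \<and> App Q (App s Q) \<in> GL (Gr ex_prog) J) \<or>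
   (\<exists>t \<in> U ex_prog Omic. x = App p t \<and> t \<in> GL (Gr ex_prog) J) \<or>
   (\<exists>t \<in> U ex_prog Omic. x = App q t \<and> App w t \<notin> J) \<or>
   (\<exists>t \<in> U ex_prog Omic. x = App w t \<and> t \<notin> J)"
  by (subst GL_unfold) (rule gl_step_ex_prog_iff)

lemma MP_val_p: "t \<in> U ex_prog Omic \<Longrightarrow> MP_val ex_prog (App p t) = MP_val ex_prog t"
  unfolding MP_val_def by (rule wf_val_eqI) (subst GL_ex_prog_iff, auto)

lemma MP_val_q: "t \<in> U ex_prog Omic \<Longrightarrow> MP_val ex_prog (App q t) = MP_val ex_prog t"
  unfolding MP_val_def
  by (rule wf_val_double_negation[where c = "App w t"]; subst GL_ex_prog_iff) auto

lemma MP_val_s_p: "MP_val ex_prog (App s p) = FalseV"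
  unfolding MP_val_def
  by (rule wf_val_positive_loop[where b = "App p (App s p)"]) (auto simp: gl_step_ex_prog_iff)

lemma MP_val_s_q: "MP_val ex_prog (App s q) = ZeroV"
proof -
  have "App s q \<in> GL (Gr ex_prog) J \<longleftrightarrow> App w (App s q) \<notin> J" for J
  proof -
    have "App s q \<in> GL (Gr ex_prog) J \<longleftrightarrow> App q (App s q) \<in> GL (Gr ex_prog) J"
      using constants_in_U by (subst GL_ex_prog_iff) auto
    also have "\<dots> \<longleftrightarrow> App w (App s q) \<notin> J"
      using s_q_in_U by (subst GL_ex_prog_iff) auto
    finally show ?thesis .
  qed
  moreover have "App w (App s q) \<in> GL (Gr ex_prog) J \<longleftrightarrow> App s q \<notin> J" for J
    using s_q_in_U by (subst GL_ex_prog_iff) auto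
  ultimately show ?thesis
    unfolding MP_val_def by (rule wf_val_negative_loop)
qed

theorem lemma1:
  shows "\<not> extensional ex_prog (MP_val ex_prog)"
proof
  assume "extensional ex_prog (MP_val ex_prog)"
  moreover have "arg_ty (Arrow oo Omic)"
    by (intro pred_ty_arg_ty.intros)
  ultimately have "ext_eq ex_prog (MP_val ex_prog) (Arrow oo Omic) s s"
    using constants_in_U unfolding extensional_def by blast
  moreover have "ext_eq ex_prog (MP_val ex_prog) oo p q"
    unfolding ext_eq.simps using MP_val_p MP_val_q by metis
  ultimately have "MP_val ex_prog (App s p) = MP_val ex_prog (App s q)"
    using constants_in_U unfolding ext_eq.simps(3) ext_eq.simps(2) by blast
  then show False
    using MP_val_s_p MP_val_s_q by simp
qed

end
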